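(* Let $f_1,f_2:\mathbb R^d\to\mathbb R$ be convex with $\nabla f_i$ globally Lipschitz continuous with modulus $L_i>0$ ($i=1,2$), let $f_3:\mathbb R^d\to\mathbb R\cup\{+\infty\}$ be proper and lower semicontinuous, and assume $\varphi:=f_1+f_2+f_3$ has a nonempty set of minimizers. Let $\alpha,\gamma,\lambda>0$ and let $(x_1^k,x_2^k,x_3^k)_k$, $(z_1^k,z_2^k)_k$ be sequences generated by the relaxed Ryu splitting method. Writing $\Delta x_i^k=x_i^{k+1}-x_i^k$ and $\Delta g_i^k=\nabla f_i(x_i^{k+1})-\nabla f_i(x_i^k)$ for $i=1,2$, for all $k\ge0$: $$\sum_{i=1}^2\Big[f_i(x_i^k)-f_i(x_i^{k+1})-\langle\nabla f_i(x_i^{k+1}),x_3^k-x_i^{k+1}\rangle+\langle\nabla f_i(x_i^k),x_3^k-x_i^k\rangle\Big]$$ $$\ge\sum_{i=1}^2\Big(\frac{1}{2L_i}-\frac{\gamma}{\lambda}\Big)\|\Delta g_i^k\|^2-\frac{1}{\lambda}\langle\Delta g_1^k,\Delta x_1^k\rangle-\frac{\alpha}{\lambda}\langle\Delta g_2^k,\Delta x_2^k\rangle+\frac{\alpha}{\lambda}\langle\Delta g_2^k,\Delta x_1^k\rangle.$$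
   Context: For $h:\mathbb R^d\to\mathbb R\cup\{+\infty\}$ and $\gamma>0$, $\mathrm{prox}_{\gamma h}(z):=\operatorname{argmin}_{y}\{h(y)+\frac{1}{2\gamma}\|y-z\|^2\}$. The relaxed Ryu splitting method: given $z_1^0,z_2^0\in\mathbb R^d$, for $k\ge0$, $x_1^k=\mathrm{prox}_{\gamma f_1}(z_1^k)$, $x_2^k=\mathrm{prox}_{\frac{\gamma}{\alpha}f_2}(\frac{z_2^k}{\alpha}+x_1^k)$, $x_3^k\in\mathrm{prox}_{\gamma f_3}(x_1^k-z_1^k+x_2^k-z_2^k)$, $z_1^{k+1}=z_1^k+\lambda(x_3^k-x_1^k)$, $z_2^{k+1}=z_2^k+\lambda(x_3^k-x_2^k)$. *)

theory Defs
  imports "HOL-Analysis.Analysis" "HOL-Library.Extended_Real"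
begin

definition prox :: "('a::real_normed_vector \<Rightarrow> ereal) \<Rightarrow> real \<Rightarrow> 'a \<Rightarrow> 'a set" where
  "prox h \<gamma> z = {y. \<forall>w. h y + ereal (norm (y - z)^2 / (2*\<gamma>)) \<le> h w + ereal (norm (w - z)^2 / (2*\<gamma>))}"

definition proper_fun :: "('a \<Rightarrow> ereal) \<Rightarrow> bool" where
  "proper_fun h \<longleftrightarrow> (\<forall>x. h x \<noteq> -\<infinity>) \<and> (\<exists>x. h x \<noteq> \<infinity>)"

definition lsc :: "('a::topological_space \<Rightarrow> ereal) \<Rightarrow> bool" where
  "lsc h \<longleftrightarrow> (\<forall>x. h x \<le> Liminf (at x) h)"

end

theory Submission
  imports Defs
begin

text \<open>For smooth f the prox step is characterised by its optimality condition, so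
  z1 = x1 + \<gamma> \<nabla>f1(x1) and z2 = \<gamma> \<nabla>f2(x2) + \<alpha> (x2 - x1); the z-updates then
  express \<lambda> (x3 - xi) through the increments \<Delta>xi and \<Delta>gi. Each bracket of the
  claim is the Bregman gap of fi between consecutive iterates minus \<langle>\<Delta>gi, x3 - xi\<rangle>, and
  for a convex function with L-Lipschitz gradient the Bregman gap is at least
  \<parallel>\<Delta>g\<parallel>^2 / (2L).\<close>

lemma has_real_derivative_along_line:
  fixes f :: "'a::real_inner \<Rightarrow> real"
  assumes "GDERIV f (a + t *\<^sub>R v) :> d"
  shows "((\<lambda>s. f (a + s *\<^sub>R v)) has_real_derivative inner d v) (at t)"
proof -
  have "((\<lambda>s. a + s *\<^sub>R v) has_derivative (\<lambda>s. s *\<^sub>R v)) (at t)"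
    by (auto intro!: derivative_eq_intros)
  from has_derivative_compose[OF this assms[unfolded gderiv_def]]
  show ?thesis
    by (simp add: o_def has_field_derivative_def inner_commute mult_commute_abs)
qed

lemma lipschitz_gradient_upper_bound:
  fixes f :: "'a::real_inner \<Rightarrow> real"
  assumes grad: "\<And>x. GDERIV f x :> g x" and lip: "L-lipschitz_on UNIV g"
  shows "f b \<le> f a + inner (g a) (b - a) + L / 2 * norm (b - a)^2"
proof -
  define v where "v = b - a"
  define h where "h t = f (a + t *\<^sub>R v) - t * inner (g a) v - L / 2 * t^2 * norm v ^ 2" for t
  define h' where "h' t = inner (g (a + t *\<^sub>R v) - g a) v - L * t * norm v ^ 2" for t
  have "(h has_real_derivative h' t) (at t)" for t
    unfolding h_def[abs_def] h'_def inner_diff_left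
    by (rule derivative_eq_intros has_real_derivative_along_line[OF grad] refl | simp)+
  then obtain t where t: "0 < t" "t < 1" "h 1 - h 0 = h' t"
    using MVT2[of 0 1 h h'] by auto
  have "inner (g (a + t *\<^sub>R v) - g a) v \<le> norm (g (a + t *\<^sub>R v) - g a) * norm v"
    by (rule norm_cauchy_schwarz)
  also have "\<dots> \<le> L * norm (t *\<^sub>R v) * norm v"
    using lipschitz_onD[OF lip, of "a + t *\<^sub>R v" a] by (simp add: dist_norm mult_right_mono)
  also have "\<dots> = L * t * norm v ^ 2"
    using t by (simp add: power2_eq_square)
  finally have "h' t \<le> 0"
    unfolding h'_def by simp
  with t have "h 1 \<le> h 0" by simp
  then show ?thesis unfolding h_def v_def by simp
qed

lemma convex_on_gradient_inequality:
  fixes f :: "'a::real_inner \<Rightarrow> real"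
  assumes cvx: "convex_on UNIV f" and grad: "GDERIV f y :> d"
  shows "f y + inner d (u - y) \<le> f u"
proof -
  define h where "h t = f (y + t *\<^sub>R (u - y))" for t
  have "convex_on UNIV h"
  proof
    fix s a b :: real
    assume "0 < s" "s < 1"
    moreover have "y + ((1 - s) * a + s * b) *\<^sub>R (u - y)
        = (1 - s) *\<^sub>R (y + a *\<^sub>R (u - y)) + s *\<^sub>R (y + b *\<^sub>R (u - y))"
      by (simp add: algebra_simps)
    ultimately show "h ((1 - s) *\<^sub>R a + s *\<^sub>R b) \<le> (1 - s) * h a + s * h b"
      unfolding h_def using convex_onD[OF cvx, of s] by simp
  qed simp
  moreover have "(h has_real_derivative inner d (u - y)) (at 0)"
    unfolding h_def[abs_def] using has_real_derivative_along_line[of f y 0 "u - y" d] grad by simp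
  ultimately have "inner d (u - y) * (1 - 0) \<le> h 1 - h 0"
    by (intro convex_on_imp_above_tangent) auto
  then show ?thesis unfolding h_def by simp
qed

text \<open>The point u is one gradient step of length 1/L from x: the descent lemma bounds f u from
  above at x, the gradient inequality bounds it from below at y.\<close>
lemma convex_lipschitz_gradient_bregman_lower_bound:
  fixes f :: "'a::real_inner \<Rightarrow> real"
  assumes cvx: "convex_on UNIV f" and grad: "\<And>x. GDERIV f x :> g x"
    and lip: "L-lipschitz_on UNIV g" and L: "L > 0"
  shows "1 / (2 * L) * norm (g x - g y)^2 \<le> f x - f y - inner (g y) (x - y)"
proof -
  define D where "D = g x - g y"
  define u where "u = x - (1 / L) *\<^sub>R D"
  have "f y + inner (g y) (u - y) \<le> f u"
    by (rule convex_on_gradient_inequality[OF cvx grad])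
  also have "f u \<le> f x + inner (g x) (u - x) + L / 2 * norm (u - x)^2"
    by (rule lipschitz_gradient_upper_bound[OF grad lip])
  finally have "inner (g y) (u - y) - inner (g x) (u - x) - L / 2 * norm (u - x)^2 \<le> f x - f y"
    by simp
  moreover have "inner (g y) (u - y) - inner (g x) (u - x) - L / 2 * norm (u - x)^2
      = inner (g y) (x - y) + 1 / (2 * L) * norm D ^ 2"
  proof -
    have ux: "u - x = - (1 / L) *\<^sub>R D" and uy: "u - y = (x - y) - (1 / L) *\<^sub>R D"
      unfolding u_def by simp_all
    have "inner (g x) D - inner (g y) D = norm D ^ 2"
      unfolding D_def by (simp add: power2_norm_eq_inner inner_diff_left)
    then show ?thesis
      unfolding ux uy using L by (simp add: inner_diff_right inner_add_right power2_eq_square field_simps)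
  qed
  ultimately show ?thesis unfolding D_def by simp
qed

lemma convex_lipschitz_gradient_three_point:
  fixes f :: "'a::real_inner \<Rightarrow> real"
  assumes "convex_on UNIV f" and "\<And>x. GDERIV f x :> g x"
    and "L-lipschitz_on UNIV g" and "L > 0"
  shows "1 / (2 * L) * norm (g y - g x)^2 - inner (g y - g x) (w - x)
    \<le> f x - f y - inner (g y) (w - y) + inner (g x) (w - x)"
proof -
  have "f x - f y - inner (g y) (w - y) + inner (g x) (w - x)
      = f x - f y - inner (g y) (x - y) - inner (g y - g x) (w - x)"
    by (simp add: inner_diff_left inner_diff_right)
  then show ?thesis
    using convex_lipschitz_gradient_bregman_lower_bound[OF assms, of x y]
    by (simp add: norm_minus_commute)
qed

lemma prox_differentiable_eq:
  fixes f :: "'a::real_inner \<Rightarrow> real"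
  assumes grad: "GDERIV f y :> d" and c: "c > 0"
    and y: "y \<in> prox (\<lambda>x. ereal (f x)) c z"
  shows "z = y + c *\<^sub>R d"
proof -
  define F where "F w = f w + inner (w - z) (w - z) / (2 * c)" for w
  have "(F has_derivative (\<lambda>h. inner h d + (inner h (y - z) + inner (y - z) h) / (2 * c))) (at y)"
    unfolding F_def[abs_def] using grad c unfolding gderiv_def
    by (auto intro!: derivative_eq_intros simp: fun_eq_iff field_simps)
  moreover have "(\<lambda>h. inner h d + (inner h (y - z) + inner (y - z) h) / (2 * c))
      = (\<lambda>h. inner h (d - (1 / c) *\<^sub>R (z - y)))"
    using c by (simp add: fun_eq_iff inner_commute inner_diff_right inner_add_right field_simps)
  ultimately have "(F has_derivative (\<lambda>h. inner h (d - (1 / c) *\<^sub>R (z - y)))) (at y)"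
    by simp
  moreover have "\<forall>w\<in>UNIV. F y \<le> F w"
    using y unfolding prox_def F_def by (simp add: power2_norm_eq_inner)
  ultimately have "(\<lambda>h. inner h (d - (1 / c) *\<^sub>R (z - y))) = (\<lambda>h. 0)"
    by (intro differential_zero_maxmin[of y UNIV]) auto
  then have "inner (d - (1 / c) *\<^sub>R (z - y)) (d - (1 / c) *\<^sub>R (z - y)) = 0"
    by meson
  then have "c *\<^sub>R d = z - y"
    using c by simp
  then show ?thesis
    by (simp add: algebra_simps)
qed

theorem lemma4:
  fixes f1 f2 :: "'a::euclidean_space \<Rightarrow> real"
    and g1 g2 :: "'a \<Rightarrow> 'a"
    and f3 :: "'a \<Rightarrow> ereal"
    and L1 L2 \<alpha> \<gamma> lam :: real
    and x1 x2 x3 z1 z2 :: "nat \<Rightarrow> 'a"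
  assumes cvx1: "convex_on UNIV f1" and cvx2: "convex_on UNIV f2"
    and grad1: "\<And>x. GDERIV f1 x :> g1 x" and grad2: "\<And>x. GDERIV f2 x :> g2 x"
    and L1pos: "L1 > 0" and L2pos: "L2 > 0"
    and lip1: "L1-lipschitz_on UNIV g1" and lip2: "L2-lipschitz_on UNIV g2"
    and proper3: "proper_fun f3" and lsc3: "lsc f3"
    and minim: "\<exists>x. \<forall>y. ereal (f1 x) + ereal (f2 x) + f3 x \<le> ereal (f1 y) + ereal (f2 y) + f3 y"
    and \<alpha>pos: "\<alpha> > 0" and \<gamma>pos: "\<gamma> > 0" and lampos: "lam > 0"
    and it1: "\<And>k. x1 k \<in> prox (\<lambda>x. ereal (f1 x)) \<gamma> (z1 k)"
    and it2: "\<And>k. x2 k \<in> prox (\<lambda>x. ereal (f2 x)) (\<gamma> / \<alpha>) ((1/\<alpha>) *\<^sub>R z2 k + x1 k)"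
    and it3: "\<And>k. x3 k \<in> prox f3 \<gamma> (x1 k - z1 k + x2 k - z2 k)"
    and up1: "\<And>k. z1 (Suc k) = z1 k + lam *\<^sub>R (x3 k - x1 k)"
    and up2: "\<And>k. z2 (Suc k) = z2 k + lam *\<^sub>R (x3 k - x2 k)"
  shows "(f1 (x1 k) - f1 (x1 (Suc k)) - inner (g1 (x1 (Suc k))) (x3 k - x1 (Suc k))
            + inner (g1 (x1 k)) (x3 k - x1 k))
       + (f2 (x2 k) - f2 (x2 (Suc k)) - inner (g2 (x2 (Suc k))) (x3 k - x2 (Suc k))
            + inner (g2 (x2 k)) (x3 k - x2 k))
     \<ge> (1 / (2 * L1) - \<gamma> / lam) * norm (g1 (x1 (Suc k)) - g1 (x1 k))^2
       + (1 / (2 * L2) - \<gamma> / lam) * norm (g2 (x2 (Suc k)) - g2 (x2 k))^2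
       - (1 / lam) * inner (g1 (x1 (Suc k)) - g1 (x1 k)) (x1 (Suc k) - x1 k)
       - (\<alpha> / lam) * inner (g2 (x2 (Suc k)) - g2 (x2 k)) (x2 (Suc k) - x2 k)
       + (\<alpha> / lam) * inner (g2 (x2 (Suc k)) - g2 (x2 k)) (x1 (Suc k) - x1 k)"
proof -
  let ?dx1 = "x1 (Suc k) - x1 k" and ?dx2 = "x2 (Suc k) - x2 k"
  let ?dg1 = "g1 (x1 (Suc k)) - g1 (x1 k)" and ?dg2 = "g2 (x2 (Suc k)) - g2 (x2 k)"
  have z1: "z1 j = x1 j + \<gamma> *\<^sub>R g1 (x1 j)" for j
    using prox_differentiable_eq[OF grad1 \<gamma>pos it1] .
  have z2: "z2 j = \<gamma> *\<^sub>R g2 (x2 j) + \<alpha> *\<^sub>R (x2 j - x1 j)" for j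
  proof -
    have "(1 / \<alpha>) *\<^sub>R z2 j + x1 j = x2 j + (\<gamma> / \<alpha>) *\<^sub>R g2 (x2 j)"
      using prox_differentiable_eq[OF grad2 _ it2] \<gamma>pos \<alpha>pos by simp
    then have "\<alpha> *\<^sub>R ((1 / \<alpha>) *\<^sub>R z2 j + x1 j) = \<alpha> *\<^sub>R (x2 j + (\<gamma> / \<alpha>) *\<^sub>R g2 (x2 j))"
      by simp
    with \<alpha>pos show ?thesis
      by (simp add: algebra_simps)
  qed
  have step1: "lam *\<^sub>R (x3 k - x1 k) = ?dx1 + \<gamma> *\<^sub>R ?dg1"
    using up1[of k] z1[of k] z1[of "Suc k"] by (simp add: algebra_simps)
  have step2: "lam *\<^sub>R (x3 k - x2 k) = \<gamma> *\<^sub>R ?dg2 + \<alpha> *\<^sub>R ?dx2 - \<alpha> *\<^sub>R ?dx1"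
    using up2[of k] z2[of k] z2[of "Suc k"] by (simp add: algebra_simps)
  have unscale: "inner u v = inner u (lam *\<^sub>R v) / lam" for u v :: 'a
    using lampos by simp
  have ip1: "inner ?dg1 (x3 k - x1 k) = 1 / lam * inner ?dg1 ?dx1 + \<gamma> / lam * norm ?dg1 ^ 2"
    by (subst unscale) (simp add: step1 inner_add_right power2_norm_eq_inner add_divide_distrib)
  have ip2: "inner ?dg2 (x3 k - x2 k)
      = \<gamma> / lam * norm ?dg2 ^ 2 + \<alpha> / lam * inner ?dg2 ?dx2 - \<alpha> / lam * inner ?dg2 ?dx1"
    by (subst unscale) (simp add: step2 inner_add_right inner_diff_right power2_norm_eq_inner
        add_divide_distrib diff_divide_distrib)
  show ?thesis
    using convex_lipschitz_gradient_three_point[OF cvx1 grad1 lip1 L1pos,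
        where x = "x1 k" and y = "x1 (Suc k)" and w = "x3 k"]
      convex_lipschitz_gradient_three_point[OF cvx2 grad2 lip2 L2pos,
        where x = "x2 k" and y = "x2 (Suc k)" and w = "x3 k"]
    unfolding ip1 ip2 by (simp add: algebra_simps)
qed

end
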